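(* For every prime power $q$ and every integer $h\geq 2$, there exists a $2$-fold blocking set of size $2(q^h+q^{h-1}+1)$ in $\mathrm{PG}(2,q^h)$.
   Context: A $2$-fold blocking set is a point set meeting every line in at least $2$ points. *)

theory Defs
  imports Main "HOL-Computational_Algebra.Primes"
begin

text \<open>A point is the set of nonzero scalar multiples of a nonzero vector (a 1-dimensional
  subspace minus 0); a line is the set of points whose vectors satisfy a nontrivial
  homogeneous linear equation.\<close>

definition pg_point :: "'a::field \<times> 'a \<times> 'a \<Rightarrow> ('a \<times> 'a \<times> 'a) set" where
  "pg_point v = {(c * fst v, c * fst (snd v), c * snd (snd v)) | c. c \<noteq> 0}"

definition pg_points :: "('a::field \<times> 'a \<times> 'a) set set" where
  "pg_points = pg_point ` (UNIV - {(0, 0, 0)})"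

definition pg_line :: "'a::field \<times> 'a \<times> 'a \<Rightarrow> ('a \<times> 'a \<times> 'a) set set" where
  "pg_line a = {pg_point (x, y, z) | x y z. (x, y, z) \<noteq> (0, 0, 0) \<and>
      fst a * x + fst (snd a) * y + snd (snd a) * z = 0}"

definition pg_lines :: "('a::field \<times> 'a \<times> 'a) set set set" where
  "pg_lines = pg_line ` (UNIV - {(0, 0, 0)})"

definition fold_blocking_set :: "nat \<Rightarrow> ('a::field \<times> 'a \<times> 'a) set set \<Rightarrow> bool" where
  "fold_blocking_set t B \<longleftrightarrow> B \<subseteq> pg_points \<and> (\<forall>L\<in>pg_lines. card (B \<inter> L) \<ge> t)"

end

(* Let K = GF(q) be the subfield of F = GF(q^h) fixed by x |-> x^q, and let f : F -> K be a K-linear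
   form with f 1 = 1, e.g. a rescaled relative trace; its kernel has q^(h-1) elements.  The points
   <(x, f x, z)> with x in F and z in K form a blocking set of at most q^h + q^(h-1) + 1 points: for a
   line a.v = 0 the additive map (x, z) |-> a.(x, f x, z) sends the q^(h+1) elements of F x K into F,
   so two of them collide and their difference is a point on the line.  The same holds for the image
   of this set under a nonsingular linear map sigma.  For q >= 3 the map
   sigma (x, y, z) = (z, x + e1 y + e2 z, y - theta z), with theta a nonzero kernel element outside K
   and e1, e2 in K found by counting, makes the two blocking sets disjoint, so their union is a 2-fold
   blocking set.  For q = 2 the three sides of a triangle, 3 q^h points, already are one.  Any 2-fold
   blocking set can then be padded with further points to the exact size 2 (q^h + q^(h-1) + 1). *)

theory Submission
  imports Defs "HOL-Number_Theory.Residues" "HOL-Computational_Algebra.Polynomial"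
    "HOL-Library.Product_Plus"
begin

section \<open>Finite fields and linear forms\<close>

lemma power_card_UNIV_eq_self:
  fixes x :: "'a::{finite,field}"
  shows "x ^ card (UNIV :: 'a set) = x"
proof (cases "x = 0")
  case False
  let ?U = "UNIV - {0::'a}"
  have "(\<Prod>y\<in>?U. y) = (\<Prod>y\<in>?U. x * y)"
    by (rule prod.reindex_bij_witness[of _ "\<lambda>y. x * y" "\<lambda>y. y / x"]) (use False in auto)
  also have "\<dots> = x ^ card ?U * (\<Prod>y\<in>?U. y)"
    by (simp add: prod.distrib)
  finally have "x ^ card ?U = 1"
    by (simp add: prod_zero_iff)
  moreover have "card (UNIV :: 'a set) = Suc (card ?U)"
    by (simp add: card_Diff_singleton Suc_diff_1 finite_UNIV_card_ge_0)
  ultimately show ?thesis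
    by (metis mult.right_neutral power_Suc)
qed (simp add: finite_UNIV_card_ge_0)

lemma prime_CHAR_finite_field: "prime CHAR('a::{finite,field})"
  by (simp add: finite_imp_CHAR_pos prime_CHAR_semidom)

lemma CHAR_eq_if_card_eq_prime_power:
  assumes "prime p" and "card (UNIV :: 'a::{finite,field} set) = p ^ n"
  shows "CHAR('a) = p"
proof -
  have "CHAR('a) dvd p ^ n"
    using CHAR_dvd_CARD[where ?'a = 'a] assms(2) by simp
  then have "CHAR('a) dvd p"
    using prime_CHAR_finite_field prime_dvd_power by blast
  then show ?thesis
    using prime_CHAR_finite_field assms(1) primes_dvd_imp_eq by blast
qed

locale type_subfield =
  fixes K :: "'a::field set"
  assumes one_mem: "1 \<in> K"
    and diff_mem: "s \<in> K \<Longrightarrow> t \<in> K \<Longrightarrow> s - t \<in> K"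
    and mult_mem: "s \<in> K \<Longrightarrow> t \<in> K \<Longrightarrow> s * t \<in> K"
    and inverse_mem: "t \<in> K \<Longrightarrow> inverse t \<in> K"
begin

lemma zero_mem: "0 \<in> K"
  using diff_mem[OF one_mem one_mem] by simp

lemma divide_mem: "s \<in> K \<Longrightarrow> t \<in> K \<Longrightarrow> s / t \<in> K"
  by (simp add: divide_inverse mult_mem inverse_mem)

end

locale linear_form = type_subfield K + additive f
  for K :: "'a::{finite,field} set" and f :: "'a \<Rightarrow> 'a" +
  assumes scale: "t \<in> K \<Longrightarrow> f (t * x) = t * f x"
    and form_in_K: "f x \<in> K"
    and normalised: "f 1 = 1"
begin

lemma fixes_K: "t \<in> K \<Longrightarrow> f t = t"
  using scale[of t 1] normalised by simp

lemma card_fiber: "t \<in> K \<Longrightarrow> card {x. f x = t} = card {x. f x = 0}"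
  by (rule bij_betw_same_card[of "\<lambda>x. x - t"], rule bij_betwI[where g = "\<lambda>y. y + t"])
    (auto simp: diff add fixes_K zero)

lemma card_UNIV_eq: "card (UNIV :: 'a set) = card K * card {x. f x = 0}"
proof -
  have "UNIV = (\<Union>t\<in>K. {x. f x = t})"
    using form_in_K by auto
  moreover have "card (\<Union>t\<in>K. {x. f x = t}) = (\<Sum>t\<in>K. card {x. f x = t})"
    by (rule card_UN_disjoint) auto
  ultimately have "card (UNIV :: 'a set) = (\<Sum>t\<in>K. card {x. f x = t})"
    by simp
  also have "\<dots> = card K * card {x. f x = 0}"
    by (simp add: card_fiber)
  finally show ?thesis .
qed

end

section \<open>The relative trace\<close>

definition frobenius_fixed :: "nat \<Rightarrow> 'a::field set" where
  "frobenius_fixed q = {t. t ^ q = t}"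

definition rel_trace :: "nat \<Rightarrow> nat \<Rightarrow> 'a::field \<Rightarrow> 'a" where
  "rel_trace q h x = (\<Sum>i<h. x ^ q ^ i)"

context
  fixes q k :: nat
  assumes q_eq: "q = CHAR('a::{finite,field}) ^ k" and k_pos: "k \<ge> 1"
begin

lemma q_ge_2: "q \<ge> 2"
proof -
  have "2 \<le> CHAR('a)"
    using prime_CHAR_finite_field prime_ge_2_nat by blast
  moreover have "CHAR('a) \<le> q"
    using calculation k_pos q_eq by (simp add: self_le_power)
  ultimately show ?thesis
    by linarith
qed

lemma frobenius_power_add: "(x + y :: 'a) ^ q ^ i = x ^ q ^ i + y ^ q ^ i"
  by (rule freshmans_dream'[OF prime_CHAR_finite_field, where n = "k * i"]) (simp add: q_eq power_mult)

lemma frobenius_power_sum: "(sum g A :: 'a) ^ q ^ i = (\<Sum>j\<in>A. g j ^ q ^ i)"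
  by (rule freshmans_dream_sum'[OF prime_CHAR_finite_field, where n = "k * i"]) (simp add: q_eq power_mult)

lemma frobenius_diff: "(x - y :: 'a) ^ q = x ^ q - y ^ q"
  using frobenius_power_add[of "x - y" y 1] by (simp add: eq_diff_eq)

lemma frobenius_fixed_power: "t \<in> frobenius_fixed q \<Longrightarrow> (t :: 'a) ^ q ^ i = t"
  by (induction i) (simp_all add: frobenius_fixed_def power_mult)

lemma subfield_frobenius_fixed: "type_subfield (frobenius_fixed q :: 'a set)"
  by unfold_locales (simp_all add: frobenius_fixed_def frobenius_diff power_mult_distrib power_inverse)

lemma card_frobenius_fixed_le: "card (frobenius_fixed q :: 'a set) \<le> q"
proof -
  define P :: "'a poly" where "P = monom 1 q - monom 1 1"
  have "coeff P q = 1"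
    using q_ge_2 by (simp add: P_def coeff_monom)
  then have "P \<noteq> 0"
    by auto
  moreover have "degree P \<le> q"
    unfolding P_def using q_ge_2 by (intro degree_diff_le) (auto simp: degree_monom_eq)
  moreover have "{x. poly P x = 0} = frobenius_fixed q"
    by (auto simp: P_def frobenius_fixed_def poly_monom)
  ultimately show ?thesis
    using card_poly_roots_bound[of P] by simp
qed

lemma additive_rel_trace: "additive (rel_trace q h :: 'a \<Rightarrow> 'a)"
  by unfold_locales (simp add: rel_trace_def frobenius_power_add sum.distrib)

lemma rel_trace_scale:
  "t \<in> frobenius_fixed q \<Longrightarrow> rel_trace q h (t * x) = t * rel_trace q h (x :: 'a)"
  by (simp add: rel_trace_def power_mult_distrib frobenius_fixed_power sum_distrib_left)

context
  fixes h :: nat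
  assumes card_eq: "card (UNIV :: 'a set) = q ^ h" and h_pos: "h \<ge> 1"
begin

lemma rel_trace_mem: "rel_trace q h (x :: 'a) \<in> frobenius_fixed q"
proof -
  define g where "g i = x ^ q ^ i" for i
  have "(rel_trace q h x) ^ q = (\<Sum>i<h. (x ^ q ^ i) ^ q)"
    using frobenius_power_sum[of "\<lambda>i. x ^ q ^ i" "{..<h}" 1] by (simp add: rel_trace_def)
  also have "\<dots> = (\<Sum>i<h. g (Suc i))"
    by (simp add: g_def mult.commute flip: power_mult)
  also have "\<dots> = (\<Sum>i<h. g i) + g h - g 0"
    using sum.lessThan_Suc[of g h] sum.lessThan_Suc_shift[of g h] by (simp add: algebra_simps)
  also have "g h = g 0"
    using power_card_UNIV_eq_self[of x] card_eq by (simp add: g_def)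
  finally show ?thesis
    by (simp add: frobenius_fixed_def rel_trace_def g_def)
qed

lemma card_rel_trace_kernel_le: "card {x :: 'a. rel_trace q h x = 0} \<le> q ^ (h - 1)"
proof -
  define P :: "'a poly" where "P = (\<Sum>i<h. monom 1 (q ^ i))"
  have "coeff P (q ^ (h - 1)) = (\<Sum>i<h. if i = h - 1 then 1 else 0)"
    unfolding P_def coeff_sum using q_ge_2 by (intro sum.cong) (auto simp: coeff_monom)
  also have "\<dots> = 1"
    using h_pos by simp
  finally have "P \<noteq> 0"
    by auto
  moreover have "degree P \<le> q ^ (h - 1)"
    unfolding P_def
  proof (rule degree_sum_le)
    fix i assume "i \<in> {..<h}"
    then have "q ^ i \<le> q ^ (h - 1)"
      using q_ge_2 by (intro power_increasing) auto
    then show "degree (monom (1 :: 'a) (q ^ i)) \<le> q ^ (h - 1)"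
      by (simp add: degree_monom_eq)
  qed simp
  moreover have "{x. poly P x = 0} = {x. rel_trace q h x = 0}"
    by (simp add: P_def rel_trace_def poly_sum poly_monom)
  ultimately show ?thesis
    using card_poly_roots_bound[of P] by simp
qed

lemma obtain_normalised_trace_form:
  obtains c :: 'a where "linear_form (frobenius_fixed q) (\<lambda>x. rel_trace q h (c * x))"
    and "card {x. rel_trace q h (c * x) = 0} \<le> q ^ (h - 1)"
proof -
  interpret additive "rel_trace q h :: 'a \<Rightarrow> 'a"
    by (rule additive_rel_trace)
  have "q ^ (h - 1) < card (UNIV :: 'a set)"
    using card_eq q_ge_2 h_pos by (simp add: power_strict_increasing)
  then have "{x :: 'a. rel_trace q h x = 0} \<noteq> UNIV"
    using card_rel_trace_kernel_le by auto
  then obtain c0 :: 'a where c0: "rel_trace q h c0 \<noteq> 0"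
    by auto
  define c where "c = inverse (rel_trace q h c0) * c0"
  have "rel_trace q h c = 1"
    using c0 unfolding c_def
    by (subst rel_trace_scale)
      (simp_all add: rel_trace_mem type_subfield.inverse_mem[OF subfield_frobenius_fixed])
  then have "c \<noteq> 0"
    using zero by auto
  show thesis
  proof
    show "linear_form (frobenius_fixed q) (\<lambda>x. rel_trace q h (c * x))"
      by (intro linear_form.intro linear_form_axioms.intro additive.intro subfield_frobenius_fixed)
        (simp_all add: distrib_left add rel_trace_mem rel_trace_scale mult.left_commute
          \<open>rel_trace q h c = 1\<close>)
    have "bij_betw ((*) c) {x. rel_trace q h (c * x) = 0} {x. rel_trace q h x = 0}"
      by (rule bij_betwI[where g = "\<lambda>y. y / c"]) (use \<open>c \<noteq> 0\<close> in auto)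
    then show "card {x. rel_trace q h (c * x) = 0} \<le> q ^ (h - 1)"
      using bij_betw_same_card card_rel_trace_kernel_le by metis
  qed
qed

end

end

section \<open>Points, lines and blocking sets of PG(2, F)\<close>

definition smul :: "'a::field \<Rightarrow> 'a \<times> 'a \<times> 'a \<Rightarrow> 'a \<times> 'a \<times> 'a" where
  "smul c v = (c * fst v, c * fst (snd v), c * snd (snd v))"

definition dot :: "'a::field \<times> 'a \<times> 'a \<Rightarrow> 'a \<times> 'a \<times> 'a \<Rightarrow> 'a" where
  "dot a v = fst a * fst v + fst (snd a) * fst (snd v) + snd (snd a) * snd (snd v)"

lemma smul_Pair [simp]: "smul c (x, y, z) = (c * x, c * y, c * z)"
  by (simp add: smul_def)

lemma dot_diff: "dot a (u - v) = dot a u - dot a v"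
  by (simp add: dot_def algebra_simps)

lemma pg_point_altdef: "pg_point v = {smul c v | c. c \<noteq> 0}"
  by (simp add: pg_point_def smul_def)

lemma pg_point_eqD:
  assumes "pg_point u = pg_point v"
  obtains c where "c \<noteq> 0" and "u = smul c v"
proof -
  have "u \<in> pg_point u"
    unfolding pg_point_altdef by (rule CollectI, rule exI[of _ 1]) (simp add: smul_def)
  then have "u \<in> pg_point v"
    by (simp only: assms)
  then show thesis
    unfolding pg_point_altdef by (elim CollectE exE conjE) (rule that)
qed

lemma pg_point_smul:
  assumes "c \<noteq> 0"
  shows "pg_point (smul c v) = pg_point v"
  unfolding pg_point_altdef
proof (intro subset_antisym subsetI)
  fix w assume "w \<in> {smul d (smul c v) | d. d \<noteq> 0}"
  then obtain d where "d \<noteq> 0" and "w = smul (d * c) v"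
    by (auto simp: smul_def mult.assoc)
  then show "w \<in> {smul d v | d. d \<noteq> 0}"
    using assms by auto
next
  fix w assume "w \<in> {smul d v | d. d \<noteq> 0}"
  then obtain d where "d \<noteq> 0" and "w = smul (d / c) (smul c v)"
    using assms by (auto simp: smul_def)
  then show "w \<in> {smul d (smul c v) | d. d \<noteq> 0}"
    using assms by auto
qed

lemma pg_point_in_pg_points: "v \<noteq> (0, 0, 0) \<Longrightarrow> pg_point v \<in> pg_points"
  by (simp add: pg_points_def)

lemma pg_point_in_pg_line: "v \<noteq> (0, 0, 0) \<Longrightarrow> dot a v = 0 \<Longrightarrow> pg_point v \<in> pg_line a"
  unfolding pg_line_def dot_def by (cases v) auto

lemma card_pg_points_ge:
  "card (UNIV :: 'a set) ^ 2 \<le> card (pg_points :: ('a::{finite,field} \<times> 'a \<times> 'a) set set)"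
proof -
  let ?g = "\<lambda>(x, y). pg_point (x, y, 1 :: 'a)"
  have "inj ?g"
    by (auto intro!: injI elim!: pg_point_eqD)
  moreover have "range ?g \<subseteq> pg_points"
    by (auto intro!: pg_point_in_pg_points)
  ultimately have "card (UNIV :: ('a \<times> 'a) set) \<le> card (pg_points :: ('a \<times> 'a \<times> 'a) set set)"
    by (intro card_inj_on_le) auto
  then show ?thesis
    by (simp add: card_cartesian_product power2_eq_square flip: UNIV_Times_UNIV)
qed

lemma fold_blocking_set_Un:
  fixes B1 B2 :: "('a::{finite,field} \<times> 'a \<times> 'a) set set"
  assumes "fold_blocking_set s B1" and "fold_blocking_set t B2" and "B1 \<inter> B2 = {}"
  shows "fold_blocking_set (s + t) (B1 \<union> B2)"
  unfolding fold_blocking_set_def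
proof (intro conjI ballI)
  show "B1 \<union> B2 \<subseteq> pg_points"
    using assms(1,2) by (simp add: fold_blocking_set_def)
  fix L :: "('a \<times> 'a \<times> 'a) set set"
  assume "L \<in> pg_lines"
  then have "s + t \<le> card (B1 \<inter> L) + card (B2 \<inter> L)"
    using assms(1,2) by (simp add: fold_blocking_set_def add_mono)
  also have "\<dots> = card ((B1 \<union> B2) \<inter> L)"
    using assms(3) by (subst card_Un_disjoint[symmetric]) (auto simp: Int_Un_distrib2)
  finally show "s + t \<le> card ((B1 \<union> B2) \<inter> L)" .
qed

lemma fold_blocking_set_1I:
  fixes B :: "('a::{finite,field} \<times> 'a \<times> 'a) set set"
  assumes "B \<subseteq> pg_points" and "\<And>L. L \<in> pg_lines \<Longrightarrow> B \<inter> L \<noteq> {}"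
  shows "fold_blocking_set 1 B"
  using assms by (simp add: fold_blocking_set_def Suc_le_eq card_gt_0_iff)

lemma fold_blocking_set_of_card:
  fixes B0 :: "('a::{finite,field} \<times> 'a \<times> 'a) set set"
  assumes "fold_blocking_set t B0" and "card B0 \<le> n" and "n \<le> card (UNIV :: 'a set) ^ 2"
  shows "\<exists>B :: ('a \<times> 'a \<times> 'a) set set. fold_blocking_set t B \<and> card B = n"
proof -
  obtain B where B: "B0 \<subseteq> B" "B \<subseteq> pg_points" "card B = n"
    using exists_subset_between[of B0 n pg_points] assms card_pg_points_ge[where ?'a = 'a]
    by (auto simp: fold_blocking_set_def)
  then have "fold_blocking_set t B"
    using assms(1) unfolding fold_blocking_set_def
    by (meson Int_mono card_mono finite order.refl order.trans)
  with B(3) show ?thesis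
    by blast
qed

(* The sides x = 0, y = 0 and z = 0 of the coordinate triangle, each point in normalised coordinates *)
definition coordinate_triangle :: "('a::field \<times> 'a \<times> 'a) set set" where
  "coordinate_triangle = insert (pg_point (0, 0, 1))
     (range (\<lambda>z. pg_point (0, 1, z)) \<union> range (\<lambda>z. pg_point (1, 0, z)) \<union> range (\<lambda>y. pg_point (1, y, 0)))"

lemma card_coordinate_triangle_le:
  "card (coordinate_triangle :: ('a::{finite,field} \<times> 'a \<times> 'a) set set) \<le> 3 * card (UNIV :: 'a set) + 1"
proof -
  let ?A = "range (\<lambda>z. pg_point (0, 1, z :: 'a))"
  let ?B = "range (\<lambda>z. pg_point (1, 0, z :: 'a))"
  let ?C = "range (\<lambda>y. pg_point (1, y, 0 :: 'a))"
  have "card (coordinate_triangle :: ('a \<times> 'a \<times> 'a) set set) \<le> card (?A \<union> ?B \<union> ?C) + 1"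
    unfolding coordinate_triangle_def by (simp add: card_insert_if)
  also have "card (?A \<union> ?B \<union> ?C) \<le> card ?A + card ?B + card ?C"
    by (meson card_Un_le add_right_mono order_trans)
  also have "\<dots> \<le> 3 * card (UNIV :: 'a set)"
    using card_image_le[OF finite_UNIV, of "\<lambda>z. pg_point (0, 1, z :: 'a)"]
      card_image_le[OF finite_UNIV, of "\<lambda>z. pg_point (1, 0, z :: 'a)"]
      card_image_le[OF finite_UNIV, of "\<lambda>y. pg_point (1, y, 0 :: 'a)"]
    by linarith
  finally show ?thesis
    by simp
qed

lemma pg_point_neq_at_infinity: "pg_point (0, y, z) \<noteq> pg_point (1, y', z')"
  by (auto elim!: pg_point_eqD)

lemma coordinate_triangle_meets_line:
  fixes a1 a2 a3 :: "'a::field"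
  obtains P Q where "P \<in> coordinate_triangle \<inter> pg_line (a1, a2, a3)"
    and "Q \<in> coordinate_triangle \<inter> pg_line (a1, a2, a3)" and "P \<noteq> Q"
proof -
  consider "a3 \<noteq> 0" | "a3 = 0" "a2 = 0" | "a3 = 0" "a2 \<noteq> 0"
    by blast
  then show thesis
  proof cases
    case 1
    show thesis
    proof (rule that)
      show "pg_point (0, 1, - a2 / a3) \<in> coordinate_triangle \<inter> pg_line (a1, a2, a3)"
        and "pg_point (1, 0, - a1 / a3) \<in> coordinate_triangle \<inter> pg_line (a1, a2, a3)"
        using 1 by (auto simp: coordinate_triangle_def dot_def intro!: pg_point_in_pg_line)
    qed (rule pg_point_neq_at_infinity)
  next
    case 2
    show thesis
    proof (rule that)
      show "pg_point (0, 1, 0) \<in> coordinate_triangle \<inter> pg_line (a1, a2, a3)"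
        and "pg_point (0, 0, 1) \<in> coordinate_triangle \<inter> pg_line (a1, a2, a3)"
        using 2 by (auto simp: coordinate_triangle_def dot_def intro!: pg_point_in_pg_line)
      show "pg_point (0, 1, 0) \<noteq> (pg_point (0, 0, 1) :: ('a \<times> 'a \<times> 'a) set)"
        by (auto elim!: pg_point_eqD)
    qed
  next
    case 3
    show thesis
    proof (rule that)
      show "pg_point (0, 0, 1) \<in> coordinate_triangle \<inter> pg_line (a1, a2, a3)"
        and "pg_point (1, - a1 / a2, 0) \<in> coordinate_triangle \<inter> pg_line (a1, a2, a3)"
        using 3 by (auto simp: coordinate_triangle_def dot_def intro!: pg_point_in_pg_line)
    qed (rule pg_point_neq_at_infinity)
  qed
qed

lemma two_fold_coordinate_triangle:
  "fold_blocking_set 2 (coordinate_triangle :: ('a::{finite,field} \<times> 'a \<times> 'a) set set)"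
  unfolding fold_blocking_set_def
proof (intro conjI ballI)
  show "coordinate_triangle \<subseteq> pg_points"
    unfolding coordinate_triangle_def by (auto intro!: pg_point_in_pg_points)
  fix L :: "('a \<times> 'a \<times> 'a) set set"
  assume "L \<in> pg_lines"
  then obtain a1 a2 a3 where "L = pg_line (a1, a2, a3)"
    unfolding pg_lines_def by auto
  then obtain P Q where "P \<in> coordinate_triangle \<inter> L" "Q \<in> coordinate_triangle \<inter> L" "P \<noteq> Q"
    using coordinate_triangle_meets_line by metis
  then show "2 \<le> card (coordinate_triangle \<inter> L)"
    using card_mono[of "coordinate_triangle \<inter> L" "{P, Q}"] by simp
qed

section \<open>Two disjoint linear blocking sets\<close>

definition twist :: "'a::field \<Rightarrow> 'a \<Rightarrow> 'a \<Rightarrow> 'a \<times> 'a \<times> 'a \<Rightarrow> 'a \<times> 'a \<times> 'a" where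
  "twist e1 e2 \<theta> v =
     (snd (snd v), fst v + e1 * fst (snd v) + e2 * snd (snd v), fst (snd v) - \<theta> * snd (snd v))"

lemma twist_Pair [simp]: "twist e1 e2 \<theta> (x, y, z) = (z, x + e1 * y + e2 * z, y - \<theta> * z)"
  by (simp add: twist_def)

lemma twist_diff: "twist e1 e2 \<theta> (u - v) = twist e1 e2 \<theta> u - twist e1 e2 \<theta> v"
  by (cases u, cases v) (simp add: algebra_simps)

lemma twist_smul: "twist e1 e2 \<theta> (smul c v) = smul c (twist e1 e2 \<theta> v)"
  by (cases v) (simp add: algebra_simps)

lemma twist_eq_0: "twist e1 e2 \<theta> v = (0, 0, 0) \<Longrightarrow> v = (0, 0, 0)"
  by (cases v) auto

context linear_form
begin

definition linear_set :: "('a \<times> 'a \<times> 'a \<Rightarrow> 'a \<times> 'a \<times> 'a) \<Rightarrow> ('a \<times> 'a \<times> 'a) set set" where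
  "linear_set \<sigma> = {pg_point (\<sigma> (x, f x, z)) | x z. z \<in> K \<and> (x, z) \<noteq> (0, 0)}"

lemma linear_set_blocking:
  assumes \<sigma>_diff: "\<And>u v. \<sigma> (u - v) = \<sigma> u - \<sigma> v"
    and \<sigma>_eq_0: "\<And>v. \<sigma> v = (0, 0, 0) \<Longrightarrow> v = (0, 0, 0)"
  shows "fold_blocking_set 1 (linear_set \<sigma>)"
proof (rule fold_blocking_set_1I)
  have \<sigma>_neq_0: "\<sigma> (x, f x, z) \<noteq> (0, 0, 0)" if "(x, z) \<noteq> (0, 0)" for x z
    using that \<sigma>_eq_0[of "(x, f x, z)"] by auto
  then show "linear_set \<sigma> \<subseteq> pg_points"
    unfolding linear_set_def by (auto intro: pg_point_in_pg_points)
  fix L :: "('a \<times> 'a \<times> 'a) set set"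
  assume "L \<in> pg_lines"
  then obtain a where L: "L = pg_line a"
    unfolding pg_lines_def by auto
  define \<phi> where "\<phi> = (\<lambda>(x, z). dot a (\<sigma> (x, f x, z)))"
  \<comment> \<open>Pigeonhole: \<open>\<phi>\<close> maps the larger set \<open>F \<times> K\<close> into \<open>F\<close>,
    and the difference of two colliding arguments gives a point on \<open>L\<close>.\<close>
  have "1 < card K"
    using card_mono[of K "{0, 1}"] zero_mem one_mem by simp
  then have "card (UNIV :: 'a set) * 1 < card (UNIV :: 'a set) * card K"
    by (rule mult_less_mono2) (simp add: finite_UNIV_card_ge_0)
  then have "card (UNIV :: 'a set) < card ((UNIV :: 'a set) \<times> K)"
    by (simp only: card_cartesian_product mult_1_right)
  then have "\<not> inj_on \<phi> (UNIV \<times> K)"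
    using card_inj_on_le[of \<phi> "UNIV \<times> K" UNIV] by auto
  then obtain x z x' z' where xz: "z \<in> K" "z' \<in> K" "(x, z) \<noteq> (x', z')"
    and "\<phi> (x, z) = \<phi> (x', z')"
    unfolding inj_on_def by auto
  then have "dot a (\<sigma> (x - x', f (x - x'), z - z')) = 0"
    using \<sigma>_diff[of "(x, f x, z)" "(x', f x', z')"] by (simp add: \<phi>_def dot_diff diff)
  moreover have "(x - x', z - z') \<noteq> (0, 0)" and "z - z' \<in> K"
    using xz by (auto intro: diff_mem)
  ultimately have "pg_point (\<sigma> (x - x', f (x - x'), z - z')) \<in> linear_set \<sigma>"
    and "pg_point (\<sigma> (x - x', f (x - x'), z - z')) \<in> L"
    unfolding linear_set_def L by (blast, intro pg_point_in_pg_line \<sigma>_neq_0)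
  then show "linear_set \<sigma> \<inter> L \<noteq> {}"
    by blast
qed

lemma form_divide_mem: "f x / x \<in> insert 0 (inverse ` {y. f y = 1})"
proof (cases "f x = 0")
  case False
  have "f (inverse (f x) * x) = 1"
    using False scale[OF inverse_mem[OF form_in_K]] by simp
  then have "x / f x \<in> {y. f y = 1}"
    by (simp add: divide_inverse mult.commute)
  then show ?thesis
    by (metis image_eqI insertI2 inverse_divide)
qed simp

lemma linear_set_subset:
  assumes \<sigma>_smul: "\<And>c v. \<sigma> (smul c v) = smul c (\<sigma> v)"
  shows "linear_set \<sigma> \<subseteq> range (\<lambda>y. pg_point (\<sigma> (y, f y, 1)))
    \<union> (\<lambda>d. pg_point (\<sigma> (1, d, 0))) ` insert 0 (inverse ` {x. f x = 1})"
proof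
  have rescale: "pg_point (\<sigma> (smul c v)) = pg_point (\<sigma> v)" if "c \<noteq> 0" for c v
    using that by (simp add: \<sigma>_smul pg_point_smul)
  fix P assume "P \<in> linear_set \<sigma>"
  then obtain x z where P: "P = pg_point (\<sigma> (x, f x, z))" and "z \<in> K" and "(x, z) \<noteq> (0, 0)"
    unfolding linear_set_def by blast
  show "P \<in> range (\<lambda>y. pg_point (\<sigma> (y, f y, 1)))
    \<union> (\<lambda>d. pg_point (\<sigma> (1, d, 0))) ` insert 0 (inverse ` {x. f x = 1})"
  proof (cases "z = 0")
    case False
    have "f (x / z) = f x / z"
      using scale[OF inverse_mem[OF \<open>z \<in> K\<close>], of x] by (simp add: divide_inverse mult.commute)
    then have "(x, f x, z) = smul z (x / z, f (x / z), 1)"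
      using False by simp
    then have "P = pg_point (\<sigma> (x / z, f (x / z), 1))"
      using P False rescale by metis
    then show ?thesis
      by blast
  next
    case True
    then have "x \<noteq> 0"
      using \<open>(x, z) \<noteq> (0, 0)\<close> by simp
    then have "(x, f x, z) = smul x (1, f x / x, 0)"
      using True by simp
    then have "P = pg_point (\<sigma> (1, f x / x, 0))"
      using P \<open>x \<noteq> 0\<close> rescale by metis
    then show ?thesis
      using form_divide_mem[of x] by blast
  qed
qed

lemma card_linear_set_le:
  assumes "\<And>c v. \<sigma> (smul c v) = smul c (\<sigma> v)"
  shows "card (linear_set \<sigma>) \<le> card (UNIV :: 'a set) + card {x. f x = 0} + 1"
proof -
  let ?A = "range (\<lambda>y. pg_point (\<sigma> (y, f y, 1)))"
  let ?B = "(\<lambda>d. pg_point (\<sigma> (1, d, 0))) ` insert 0 (inverse ` {x. f x = 1})"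
  have "card (linear_set \<sigma>) \<le> card ?A + card ?B"
    using card_mono[OF _ linear_set_subset[OF assms]] card_Un_le[of ?A ?B] by simp
  moreover have "card ?A \<le> card (UNIV :: 'a set)"
    by (rule card_image_le) simp
  moreover have "card ?B \<le> card (insert 0 (inverse ` {x. f x = 1}))"
    by (rule card_image_le) simp
  moreover have "card (insert 0 (inverse ` {x. f x = 1})) \<le> card (inverse ` {x. f x = 1}) + 1"
    by (simp add: card_insert_if)
  moreover have "card (inverse ` {x. f x = 1}) \<le> card {x. f x = 1}"
    by (rule card_image_le) simp
  ultimately show ?thesis
    using card_fiber[OF one_mem] by linarith
qed

lemma twist_key_identity:
  assumes "f \<theta> = 0" and "e1 \<in> K" "e2 \<in> K" and "z \<in> K" "z' \<in> K" "z \<noteq> 0"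
    and eq2: "x' + e1 * f x' + e2 * z' = l * f x" and eq3: "f x' - \<theta> * z' = l * z"
  shows "(1 + e1) * f x' + e2 * z' = f x * (f x' / z)"
proof -
  have "l = inverse z * (f x' - z' * \<theta>)"
    using eq3 \<open>z \<noteq> 0\<close> by (simp add: field_simps)
  then have "f l = inverse z * (f (f x') - z' * f \<theta>)"
    using assms(4,5) by (simp add: scale inverse_mem diff)
  then have "f l = f x' / z"
    using \<open>f \<theta> = 0\<close> by (simp add: fixes_K form_in_K divide_inverse mult.commute)
  have "(1 + e1) * f x' + e2 * z' = f (x' + e1 * f x' + e2 * z')"
    using assms(2,3,5) by (simp add: add scale form_in_K fixes_K algebra_simps)
  also have "\<dots> = f (f x * l)"
    using eq2 by (simp add: mult.commute)
  also have "\<dots> = f x * f l"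
    using scale[OF form_in_K] .
  finally show ?thesis
    using \<open>f l = f x' / z\<close> by simp
qed

lemma twist_collision_scalar:
  assumes "\<theta> \<notin> K" "f \<theta> = 0" and "e1 \<in> K" "e2 \<in> K" and "z \<in> K" "z' \<in> K" "z \<noteq> 0" "z' \<noteq> 0"
    and "l \<noteq> 0" and eq1: "z' = l * x" and eq2: "x' + e1 * f x' + e2 * z' = l * f x"
    and eq3: "f x' - \<theta> * z' = l * z"
  obtains b where "b \<in> K" and "e2 = b * (f (inverse (b - \<theta>)) - (1 + e1))"
proof
  define b where "b = f x' / z'"
  show "b \<in> K"
    unfolding b_def using divide_mem[OF form_in_K \<open>z' \<in> K\<close>] .
  then have "b - \<theta> \<noteq> 0"
    using \<open>\<theta> \<notin> K\<close> by auto
  have "z' * b = f x'"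
    using \<open>z' \<noteq> 0\<close> by (simp add: b_def)
  then have "l * z = l * (x * (b - \<theta>))"
    using eq1 eq3 by (simp add: algebra_simps)
  then have "z = x * (b - \<theta>)"
    using \<open>l \<noteq> 0\<close> by simp
  then have "x = z * inverse (b - \<theta>)"
    using \<open>b - \<theta> \<noteq> 0\<close> by (simp add: field_simps)
  then have "f x = z * f (inverse (b - \<theta>))"
    using \<open>z \<in> K\<close> by (simp add: scale)
  then have "(1 + e1) * (z' * b) + e2 * z' = z * f (inverse (b - \<theta>)) * (z' * b / z)"
    using twist_key_identity[OF assms(2-7) eq2 eq3] \<open>z' * b = f x'\<close> by simp
  also have "\<dots> = z' * (b * f (inverse (b - \<theta>)))"
    using \<open>z \<noteq> 0\<close> by simp
  finally have "z' * ((1 + e1) * b + e2) = z' * (b * f (inverse (b - \<theta>)))"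
    by (simp add: algebra_simps)
  then have "(1 + e1) * b + e2 = b * f (inverse (b - \<theta>))"
    using \<open>z' \<noteq> 0\<close> by simp
  then show "e2 = b * (f (inverse (b - \<theta>)) - (1 + e1))"
    by (simp add: algebra_simps)
qed

lemma twist_not_proportional:
  assumes \<theta>: "\<theta> \<notin> K" "f \<theta> = 0" and e: "e1 \<in> K" "e2 \<in> K" "1 + e1 \<noteq> 0"
    and avoid: "\<And>b. b \<in> K \<Longrightarrow> e2 \<noteq> b * (f (inverse (b - \<theta>)) - (1 + e1))"
    and z: "z \<in> K" "z' \<in> K" and "(x, z) \<noteq> (0, 0)" and "l \<noteq> 0"
  shows "twist e1 e2 \<theta> (x', f x', z') \<noteq> smul l (x, f x, z)"
proof
  assume "twist e1 e2 \<theta> (x', f x', z') = smul l (x, f x, z)"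
  then have "z' = l * x \<and> x' + e1 * f x' + e2 * z' = l * f x \<and> f x' - \<theta> * z' = l * z"
    unfolding twist_Pair smul_Pair prod.inject .
  then have eq1: "z' = l * x" and eq2: "x' + e1 * f x' + e2 * z' = l * f x"
    and eq3: "f x' - \<theta> * z' = l * z"
    by blast+
  consider "z = 0" | "z \<noteq> 0" "z' = 0" | "z \<noteq> 0" "z' \<noteq> 0"
    by blast
  then show False
  proof cases
    case 1
    have "z' = 0"
    proof (rule ccontr)
      assume "z' \<noteq> 0"
      then have "\<theta> = f x' / z'"
        using eq3 1 by (simp add: field_simps)
      then show False
        using \<theta>(1) divide_mem[OF form_in_K z(2)] by simp
    qed
    then show False
      using eq1 1 \<open>l \<noteq> 0\<close> \<open>(x, z) \<noteq> (0, 0)\<close> by simp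
  next
    case 2
    then have "f x = 0"
      using eq1 \<open>l \<noteq> 0\<close> zero by simp
    then have "f x' = 0"
      using twist_key_identity[OF \<theta>(2) e(1,2) z 2(1) eq2 eq3] 2(2) e(3) by simp
    then show False
      using eq3 2 \<open>l \<noteq> 0\<close> by simp
  next
    case 3
    then show False
      using twist_collision_scalar[OF \<theta> e(1,2) z 3 \<open>l \<noteq> 0\<close> eq1 eq2 eq3] avoid by metis
  qed
qed

lemma linear_sets_disjoint:
  assumes "\<theta> \<notin> K" "f \<theta> = 0" and "e1 \<in> K" "e2 \<in> K" "1 + e1 \<noteq> 0"
    and "\<And>b. b \<in> K \<Longrightarrow> e2 \<noteq> b * (f (inverse (b - \<theta>)) - (1 + e1))"
  shows "linear_set id \<inter> linear_set (twist e1 e2 \<theta>) = {}"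
proof (rule equals0I)
  fix P assume "P \<in> linear_set id \<inter> linear_set (twist e1 e2 \<theta>)"
  then have "P \<in> linear_set id" and "P \<in> linear_set (twist e1 e2 \<theta>)"
    by simp_all
  then obtain x z x' z' where "P = pg_point (x, f x, z)" "P = pg_point (twist e1 e2 \<theta> (x', f x', z'))"
    and "z \<in> K" "z' \<in> K" "(x, z) \<noteq> (0, 0)"
    unfolding linear_set_def id_apply by blast
  then obtain l where "l \<noteq> 0" and "twist e1 e2 \<theta> (x', f x', z') = smul l (x, f x, z)"
    by (metis pg_point_eqD)
  then show False
    using twist_not_proportional[OF assms] \<open>z \<in> K\<close> \<open>z' \<in> K\<close> \<open>(x, z) \<noteq> (0, 0)\<close> by blast
qed

lemma inverse_kernel_eq_1:
  assumes H: "\<And>\<theta>. \<theta> \<noteq> 0 \<Longrightarrow> f \<theta> = 0 \<Longrightarrow> f (inverse (1 - \<theta>)) = 0"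
    and "\<theta> \<noteq> 0" and "f \<theta> = 0"
  shows "f (inverse \<theta>) = 1"
proof -
  have "\<theta> \<noteq> 1"
    using assms(3) normalised by auto
  define u where "u = inverse (1 - \<theta>)"
  have "u \<noteq> 0" and "f u = 0"
    using H[OF assms(2,3)] \<open>\<theta> \<noteq> 1\<close> by (simp_all add: u_def)
  then have "f (inverse (1 - u)) = 0"
    by (rule H)
  moreover have "inverse (1 - u) = 1 - inverse \<theta>"
    using assms(2) \<open>\<theta> \<noteq> 1\<close> by (simp add: u_def field_simps)
  ultimately show ?thesis
    using normalised by (simp add: diff)
qed

lemma obtain_kernel_point:
  assumes "3 \<le> card K" and "\<theta>0 \<noteq> 0" and "f \<theta>0 = 0"
  obtains \<theta> where "\<theta> \<noteq> 0" and "f \<theta> = 0" and "f (inverse (1 - \<theta>)) \<noteq> 0"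
proof -
  have "\<exists>\<theta>. \<theta> \<noteq> 0 \<and> f \<theta> = 0 \<and> f (inverse (1 - \<theta>)) \<noteq> 0"
  proof (rule ccontr)
    assume "\<nexists>\<theta>. \<theta> \<noteq> 0 \<and> f \<theta> = 0 \<and> f (inverse (1 - \<theta>)) \<noteq> 0"
    then have H: "f (inverse (1 - \<theta>)) = 0" if "\<theta> \<noteq> 0" and "f \<theta> = 0" for \<theta>
      using that by blast
    \<comment> \<open>Now \<open>f (1 / \<theta>) = 1\<close> on the nonzero kernel, which is closed under scaling by \<open>K\<close>.\<close>
    have "K \<subseteq> {0, 1}"
    proof
      fix c assume "c \<in> K"
      show "c \<in> {0, 1}"
      proof (cases "c = 0")
        case False
        have "1 = f (inverse (c * \<theta>0))"
          using inverse_kernel_eq_1[OF H, of "c * \<theta>0"] False assms(2,3) scale[OF \<open>c \<in> K\<close>] by simp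
        also have "\<dots> = inverse c * f (inverse \<theta>0)"
          using scale[OF inverse_mem[OF \<open>c \<in> K\<close>]] by (simp add: inverse_mult_distrib mult.commute)
        also have "\<dots> = inverse c"
          using inverse_kernel_eq_1[OF H assms(2,3)] by simp
        finally show ?thesis
          by (simp add: inverse_eq_iff_eq)
      qed simp
    qed
    then have "card K \<le> 2"
      using card_mono[of "{0, 1}" K] by simp
    then show False
      using assms(1) by simp
  qed
  then show thesis
    using that by blast
qed

lemma obtain_avoiding_scalar:
  obtains e where "e \<in> K" and "\<And>b. b \<in> K \<Longrightarrow> e \<noteq> b * (f (inverse (b - \<theta>)) - f (inverse (1 - \<theta>)))"
proof -
  define g where "g b = b * (f (inverse (b - \<theta>)) - f (inverse (1 - \<theta>)))" for b
  have "g ` K \<subseteq> K"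
    by (auto simp: g_def intro!: mult_mem diff_mem form_in_K)
  \<comment> \<open>\<open>g 0 = g 1\<close>, so the endomorphism \<open>g\<close> of the finite set \<open>K\<close> is not surjective.\<close>
  moreover have "\<not> inj_on g K"
  proof
    assume "inj_on g K"
    then have "(0 :: 'a) = 1"
      using inj_onD[of g K 0 1] zero_mem one_mem by (simp add: g_def)
    then show False
      by simp
  qed
  ultimately have "\<not> K \<subseteq> g ` K"
    using eq_card_imp_inj_on[of K g] card_image_le[of K g] card_mono[of "g ` K" K] by fastforce
  then obtain e where "e \<in> K" and "e \<notin> g ` K"
    by blast
  then show thesis
    by (intro that) (auto simp: g_def)
qed

theorem exists_two_fold_blocking_set:
  assumes "3 \<le> card K" and "K \<noteq> UNIV"
  shows "\<exists>B :: ('a \<times> 'a \<times> 'a) set set.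
    fold_blocking_set 2 B \<and> card B \<le> 2 * (card (UNIV :: 'a set) + card {x. f x = 0} + 1)"
proof -
  have "card K < card (UNIV :: 'a set)"
    using assms(2) by (simp add: psubset_card_mono psubsetI)
  then have "{x. f x = 0} \<noteq> {0}"
    using card_UNIV_eq by auto
  then obtain \<theta>0 where "\<theta>0 \<noteq> 0" and "f \<theta>0 = 0"
    using zero by blast
  then obtain \<theta> where \<theta>: "\<theta> \<noteq> 0" "f \<theta> = 0" "f (inverse (1 - \<theta>)) \<noteq> 0"
    using obtain_kernel_point assms(1) by blast
  have "\<theta> \<notin> K"
    using \<theta> fixes_K by auto
  obtain e where e: "e \<in> K" "\<And>b. b \<in> K \<Longrightarrow> e \<noteq> b * (f (inverse (b - \<theta>)) - f (inverse (1 - \<theta>)))"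
    using obtain_avoiding_scalar by blast
  define e1 where "e1 = f (inverse (1 - \<theta>)) - 1"
  have "e1 \<in> K" and "1 + e1 \<noteq> 0"
    using \<theta>(3) by (simp_all add: e1_def diff_mem form_in_K one_mem)
  let ?B1 = "linear_set id" and ?B2 = "linear_set (twist e1 e \<theta>)"
  have "fold_blocking_set (1 + 1) (?B1 \<union> ?B2)"
  proof (rule fold_blocking_set_Un)
    show "fold_blocking_set 1 ?B1" and "fold_blocking_set 1 ?B2"
      by (rule linear_set_blocking; simp add: twist_diff twist_eq_0)+
    show "?B1 \<inter> ?B2 = {}"
      using \<open>\<theta> \<notin> K\<close> \<theta>(2) \<open>e1 \<in> K\<close> e \<open>1 + e1 \<noteq> 0\<close>
      by (intro linear_sets_disjoint) (simp_all add: e1_def)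
  qed
  then have "fold_blocking_set 2 (?B1 \<union> ?B2)"
    by (simp add: numeral_2_eq_2)
  moreover have "card (?B1 \<union> ?B2) \<le> 2 * (card (UNIV :: 'a set) + card {x. f x = 0} + 1)"
    using card_Un_le[of ?B1 ?B2] card_linear_set_le[of id] card_linear_set_le[of "twist e1 e \<theta>"]
    by (simp add: twist_smul)
  ultimately show ?thesis
    by blast
qed

end

lemma exists_two_fold_blocking_set_trace:
  assumes q: "q = CHAR('a::{finite,field}) ^ k" "k \<ge> 1" and card_eq: "card (UNIV :: 'a set) = q ^ h"
    and "h \<ge> 2" and "q \<ge> 3"
  shows "\<exists>B :: ('a \<times> 'a \<times> 'a) set set.
    fold_blocking_set 2 B \<and> card B \<le> 2 * (q ^ h + q ^ (h - 1) + 1)"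
proof -
  obtain c :: 'a where "linear_form (frobenius_fixed q) (\<lambda>x. rel_trace q h (c * x))"
    and kernel: "card {x. rel_trace q h (c * x) = 0} \<le> q ^ (h - 1)"
    using obtain_normalised_trace_form[OF q card_eq] \<open>h \<ge> 2\<close> by auto
  then interpret linear_form "frobenius_fixed q" "\<lambda>x. rel_trace q h (c * x)"
    by simp
  let ?K = "frobenius_fixed q :: 'a set"
  have "q * q ^ (h - 1) = card ?K * card {x. rel_trace q h (c * x) = 0}"
    using card_UNIV_eq card_eq \<open>h \<ge> 2\<close> by (simp flip: power_Suc)
  also have "\<dots> \<le> card ?K * q ^ (h - 1)"
    using kernel by (rule mult_le_mono2)
  finally have "q \<le> card ?K"
    using \<open>q \<ge> 3\<close> by simp
  moreover have "card ?K < card (UNIV :: 'a set)"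
    using card_frobenius_fixed_le[OF q] power_strict_increasing[of 1 h q] card_eq \<open>h \<ge> 2\<close> \<open>q \<ge> 3\<close>
    by simp
  then have "?K \<noteq> UNIV"
    by auto
  ultimately obtain B :: "('a \<times> 'a \<times> 'a) set set" where "fold_blocking_set 2 B"
    and "card B \<le> 2 * (card (UNIV :: 'a set) + card {x. rel_trace q h (c * x) = 0} + 1)"
    using exists_two_fold_blocking_set \<open>q \<ge> 3\<close> by force
  then show ?thesis
    using kernel card_eq by (intro exI[of _ B]) simp
qed

lemma blocking_size_le_square:
  fixes q h :: nat
  assumes "q \<ge> 2" and "h \<ge> 2"
  shows "2 * (q ^ h + q ^ (h - 1) + 1) \<le> (q ^ h) ^ 2"
proof -
  have "q ^ h = q * q ^ (h - 1)"
    using assms(2) by (simp flip: power_Suc)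
  then have "2 * q ^ (h - 1) \<le> q ^ h"
    using assms(1) by simp
  have "2 * 2 \<le> q ^ 2"
    using assms(1) mult_le_mono[of 2 q 2 q] by (simp add: power2_eq_square)
  also have "\<dots> \<le> q ^ h"
    using assms by (intro power_increasing) auto
  finally have "4 \<le> q ^ h"
    by simp
  have "2 * (q ^ h + q ^ (h - 1) + 1) \<le> 4 * q ^ h"
    using \<open>2 * q ^ (h - 1) \<le> q ^ h\<close> \<open>4 \<le> q ^ h\<close> by simp
  also have "\<dots> \<le> (q ^ h) ^ 2"
    using \<open>4 \<le> q ^ h\<close> by (simp add: power2_eq_square mult_le_mono1)
  finally show ?thesis .
qed

theorem corollary3p6:
  fixes q h :: nat
  assumes "\<exists>p k. prime p \<and> k \<ge> 1 \<and> q = p ^ k"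
    and "h \<ge> 2"
    and "card (UNIV :: 'a set) = q ^ h"
  shows "\<exists>B :: ('a::{finite,field} \<times> 'a \<times> 'a) set set.
           fold_blocking_set 2 B \<and> card B = 2 * (q ^ h + q ^ (h - 1) + 1)"
proof -
  obtain p k where "prime p" and "k \<ge> 1" and "q = p ^ k"
    using assms(1) by blast
  moreover from this have "CHAR('a) = p"
    using CHAR_eq_if_card_eq_prime_power[of p "k * h"] assms(3) by (simp add: power_mult)
  ultimately have q: "q = CHAR('a) ^ k" "k \<ge> 1"
    by simp_all
  then have "q \<ge> 2"
    by (rule q_ge_2)
  obtain B0 :: "('a \<times> 'a \<times> 'a) set set"
    where "fold_blocking_set 2 B0" and "card B0 \<le> 2 * (q ^ h + q ^ (h - 1) + 1)"
  proof (cases "q = 2")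
    case True
    then have "3 * card (UNIV :: 'a set) + 1 \<le> 2 * (q ^ h + q ^ (h - 1) + 1)"
      using assms(2,3) by (simp flip: power_Suc)
    then show thesis
      by (intro that[OF two_fold_coordinate_triangle] order.trans[OF card_coordinate_triangle_le])
  next
    case False
    then show thesis
      using that exists_two_fold_blocking_set_trace[OF q assms(3,2)] \<open>q \<ge> 2\<close> by auto
  qed
  then show ?thesis
    by (rule fold_blocking_set_of_card)
      (use blocking_size_le_square[OF \<open>q \<ge> 2\<close> assms(2)] assms(3) in simp)
qed

end
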